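(* For $|q|<1$, \[ \frac{f_2^2f_3f_{12}^3}{f_4^4f_6^2}+\frac{f_2^4f_3^5f_{12}^3}{f_1^4f_4^4f_6^4}=2\,\frac{f_2f_6^5}{f_1^2f_3f_4^3}. \]
   Context: For $m\in\mathbb{N}$ and $|q|<1$, $f_m:=\prod_{n\geq 1}(1-q^{mn})$. *)

theory Defs
  imports "HOL-Analysis.Analysis"
begin

definition f :: "nat \<Rightarrow> complex \<Rightarrow> complex" where
  "f m q = (\<Prod>n. (1 - q ^ (m * Suc n)))"

end

theory Submission
  imports Defs
begin

(*
  Write P k = (q^k; q^6)_oo and M k = (-q^k; q^6)_oo. Every f_m in the identity is a product of
  these, and by Jacobi's triple product with s = q^3 so are the values of
  theta s x = sum_n (-x)^n s^(n^2 - n) at x = q, q^2, -q, -q^2, -q^3 and -1. Weierstrass'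
  three-term identity at x = 1, y = -q, u = -q^3, v = q gives
    theta(q)^2 theta(q^2)^2 + theta(-q)^2 theta(-q^2)^2 = theta(-q^3)^2 theta(-q^2) theta(-1),
  i.e. (P1 P5 P2 P4)^2 + (M1 M5 M2 M4)^2 = 2 M3^4 M2 M4 M6^2. Together with
  (q;q)(-q;q) = (q^2;q^2) and (q^3;q^3)(-q^3;q^3) = (q^6;q^6) this is the claimed identity
  after clearing denominators.

  The triple product is proved after Cauchy, from the q-binomial theorem and Tannery's theorem.
  The three-term identity is a polynomial consequence of the product formula
  theta(xy) theta(x/y) = x^2 B(x) A(y) - x y A(x) B(y), where A(z) = sum_n z^(2n) s^(2n^2) and
  B(z) = sum_n z^(2n) s^(2n^2 + 2n); it comes from splitting the double series for the left-hand
  side according to the parity of m + n.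
*)

section \<open>q-Pochhammer symbols\<close>

lemma norm_power_less_one:
  fixes q :: "'a::real_normed_div_algebra"
  shows "norm q < 1 \<Longrightarrow> 0 < k \<Longrightarrow> norm (q ^ k) < 1"
  by (simp add: norm_power power_less_one_iff)

definition qpochhammer :: "nat \<Rightarrow> 'a::comm_ring_1 \<Rightarrow> 'a \<Rightarrow> 'a" where
  "qpochhammer n a q = (\<Prod>k<n. 1 - a * q ^ k)"

definition qpochhammer_inf :: "'a::{real_normed_field, banach} \<Rightarrow> 'a \<Rightarrow> 'a" where
  "qpochhammer_inf a q = (\<Prod>k. 1 - a * q ^ k)"

lemma qpochhammer_0 [simp]: "qpochhammer 0 a q = 1"
  by (simp add: qpochhammer_def)

lemma qpochhammer_Suc: "qpochhammer (Suc n) a q = (1 - a) * qpochhammer n (a * q) q"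
  unfolding qpochhammer_def by (subst prod.lessThan_Suc_shift) (simp add: mult.assoc)

lemma qpochhammer_Suc_right: "qpochhammer (Suc n) a q = qpochhammer n a q * (1 - a * q ^ n)"
  by (simp add: qpochhammer_def)

lemma qpochhammer_add: "qpochhammer (m + n) a q = qpochhammer m a q * qpochhammer n (a * q ^ m) q"
  unfolding qpochhammer_def by (induction n) (simp_all add: power_add mult_ac)

lemma qpochhammer_factor_nonzero:
  fixes a q :: "'a::real_normed_div_algebra"
  assumes "norm q \<le> 1" "norm a < 1"
  shows "1 - a * q ^ k \<noteq> 0"
proof -
  have "norm (a * q ^ k) \<le> norm a"
    using assms by (simp add: norm_mult norm_power mult_left_le power_le_one)
  then have "norm (a * q ^ k) < 1"
    using assms(2) by (rule le_less_trans)
  then show ?thesis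
    by (metis norm_one less_irrefl right_minus_eq)
qed

lemma qpochhammer_nonzero:
  fixes a q :: "'a::real_normed_field"
  assumes "norm q \<le> 1" "norm a < 1"
  shows "qpochhammer n a q \<noteq> 0"
  unfolding qpochhammer_def using qpochhammer_factor_nonzero[OF assms] by (simp add: prod_zero_iff)

lemma convergent_prod_qpochhammer:
  fixes a q :: "'a::{real_normed_field, banach}"
  assumes "norm q < 1"
  shows "convergent_prod (\<lambda>k. 1 - a * q ^ k)"
proof -
  have "summable (\<lambda>k. norm a * norm q ^ k)"
    using assms by (intro summable_mult summable_geometric) auto
  then have "summable (\<lambda>k. norm ((1 - a * q ^ k) - 1))"
    by (simp add: norm_mult norm_power)
  then show ?thesis
    by (intro abs_convergent_prod_imp_convergent_prod summable_imp_abs_convergent_prod)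
qed

lemma qpochhammer_tendsto:
  fixes a q :: "'a::{real_normed_field, banach}"
  assumes "norm q < 1"
  shows "(\<lambda>n. qpochhammer n a q) \<longlonglongrightarrow> qpochhammer_inf a q"
proof -
  have "(\<lambda>n. \<Prod>k\<le>n. 1 - a * q ^ k) \<longlonglongrightarrow> qpochhammer_inf a q"
    unfolding qpochhammer_inf_def
    by (rule convergent_prod_LIMSEQ[OF convergent_prod_qpochhammer[OF assms]])
  then show ?thesis
    unfolding qpochhammer_def
    by (subst filterlim_sequentially_Suc[symmetric]) (simp add: lessThan_Suc_atMost)
qed

lemma qpochhammer_inf_nonzero:
  fixes a q :: "'a::{real_normed_field, banach}"
  assumes "norm q < 1" "norm a < 1"
  shows "qpochhammer_inf a q \<noteq> 0"
  unfolding qpochhammer_inf_def using assms qpochhammer_factor_nonzero[of q a]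
  by (intro prodinf_nonzero convergent_prod_qpochhammer) auto

lemma qpochhammer_inf_Suc:
  fixes a q :: "'a::{real_normed_field, banach}"
  assumes "norm q < 1"
  shows "qpochhammer_inf a q = (1 - a) * qpochhammer_inf (a * q) q"
proof -
  have "(\<lambda>n. qpochhammer (Suc n) a q) \<longlonglongrightarrow> (1 - a) * qpochhammer_inf (a * q) q"
    unfolding qpochhammer_Suc by (intro tendsto_mult tendsto_const qpochhammer_tendsto assms)
  then show ?thesis
    using LIMSEQ_unique LIMSEQ_Suc[OF qpochhammer_tendsto[OF assms]] by blast
qed

lemma qpochhammer_mult_uminus:
  "qpochhammer n a q * qpochhammer n (- a) q = qpochhammer n (a\<^sup>2) (q\<^sup>2)"
  unfolding qpochhammer_def prod.distrib[symmetric]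
  by (rule prod.cong) (simp_all add: algebra_simps power2_eq_square power_mult_distrib flip: power_mult)

lemma qpochhammer_inf_mult_uminus:
  fixes a q :: "'a::{real_normed_field, banach}"
  assumes "norm q < 1"
  shows "qpochhammer_inf a q * qpochhammer_inf (- a) q = qpochhammer_inf (a\<^sup>2) (q\<^sup>2)"
proof (rule LIMSEQ_unique)
  show "(\<lambda>n. qpochhammer n a q * qpochhammer n (- a) q)
      \<longlonglongrightarrow> qpochhammer_inf a q * qpochhammer_inf (- a) q"
    by (intro tendsto_mult qpochhammer_tendsto assms)
  show "(\<lambda>n. qpochhammer n a q * qpochhammer n (- a) q) \<longlonglongrightarrow> qpochhammer_inf (a\<^sup>2) (q\<^sup>2)"
    unfolding qpochhammer_mult_uminus using norm_power_less_one[OF assms]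
    by (intro qpochhammer_tendsto) simp
qed

lemma qpochhammer_dissect:
  "qpochhammer (n * k) a q = (\<Prod>r<k. qpochhammer n (a * q ^ r) (q ^ k))"
proof -
  have "qpochhammer (n * k) a q = (\<Prod>m<n. \<Prod>i\<in>{m * k..<m * k + k}. 1 - a * q ^ i)"
    unfolding qpochhammer_def by (rule prod.nat_group[symmetric])
  also have "\<dots> = (\<Prod>m<n. \<Prod>r<k. 1 - a * q ^ (m * k + r))"
  proof (rule prod.cong[OF refl])
    fix m
    show "(\<Prod>i\<in>{m * k..<m * k + k}. 1 - a * q ^ i) = (\<Prod>r<k. 1 - a * q ^ (m * k + r))"
      using prod.shift_bounds_nat_ivl[of "\<lambda>i. 1 - a * q ^ i" 0 "m * k" k]
      by (simp add: atLeast0LessThan add.commute)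
  qed
  also have "\<dots> = (\<Prod>r<k. \<Prod>m<n. 1 - (a * q ^ r) * (q ^ k) ^ m)"
    by (subst prod.swap) (simp add: power_add mult.assoc mult.commute flip: power_mult)
  finally show ?thesis
    unfolding qpochhammer_def .
qed

lemma qpochhammer_inf_dissect:
  fixes a q :: "'a::{real_normed_field, banach}"
  assumes "norm q < 1" "k > 0"
  shows "qpochhammer_inf a q = (\<Prod>r<k. qpochhammer_inf (a * q ^ r) (q ^ k))"
proof -
  have "strict_mono (\<lambda>n. n * k)"
    using assms(2) by (intro strict_monoI) auto
  from LIMSEQ_subseq_LIMSEQ[OF qpochhammer_tendsto[OF assms(1)] this]
  have "(\<lambda>n. \<Prod>r<k. qpochhammer n (a * q ^ r) (q ^ k)) \<longlonglongrightarrow> qpochhammer_inf a q"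
    by (simp add: o_def qpochhammer_dissect)
  moreover have "(\<lambda>n. \<Prod>r<k. qpochhammer n (a * q ^ r) (q ^ k))
      \<longlonglongrightarrow> (\<Prod>r<k. qpochhammer_inf (a * q ^ r) (q ^ k))"
    by (intro tendsto_prod qpochhammer_tendsto norm_power_less_one assms)
  ultimately show ?thesis
    by (rule LIMSEQ_unique)
qed

lemma f_eq_qpochhammer_inf: "f m q = qpochhammer_inf (q ^ m) (q ^ m)"
  unfolding f_def qpochhammer_inf_def
  by (simp add: power_mult[symmetric] power_add[symmetric] mult.commute)

section \<open>Gaussian binomial coefficients\<close>

fun qbinomial :: "'a::comm_ring_1 \<Rightarrow> nat \<Rightarrow> nat \<Rightarrow> 'a" where
  "qbinomial q 0 k = (if k = 0 then 1 else 0)"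
| "qbinomial q (Suc n) 0 = 1"
| "qbinomial q (Suc n) (Suc k) = qbinomial q n k + q ^ Suc k * qbinomial q n (Suc k)"

lemma qbinomial_0_right [simp]: "qbinomial q n 0 = 1"
  by (cases n) simp_all

lemma qbinomial_eq_0: "n < k \<Longrightarrow> qbinomial q n k = 0"
proof (induction n arbitrary: k)
  case (Suc n)
  then show ?case
    by (cases k) simp_all
qed simp

lemma qbinomial_diag [simp]: "qbinomial q n n = 1"
  by (induction n) (simp_all add: qbinomial_eq_0)

lemma qbinomial_qpochhammer:
  "k \<le> n \<Longrightarrow> qbinomial q n k * qpochhammer k q q * qpochhammer (n - k) q q = qpochhammer n q q"
proof (induction n arbitrary: k)
  case (Suc n)
  consider "k = 0" | "k = Suc n" | j where "k = Suc j" "j < n"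
    using Suc.prems by (cases k) (auto simp: le_less)
  then show ?case
  proof cases
    case 3
    have "qbinomial q n j * qpochhammer (Suc j) q q * qpochhammer (n - j) q q
        = (qbinomial q n j * qpochhammer j q q * qpochhammer (n - j) q q) * (1 - q ^ Suc j)"
      by (simp add: qpochhammer_Suc_right mult_ac)
    also have "\<dots> = qpochhammer n q q * (1 - q ^ Suc j)"
      using Suc.IH[of j] 3 by simp
    finally have left: "qbinomial q n j * qpochhammer (Suc j) q q * qpochhammer (n - j) q q
        = qpochhammer n q q * (1 - q ^ Suc j)" .
    have "n - j = Suc (n - Suc j)"
      using 3 by simp
    then have "qbinomial q n (Suc j) * qpochhammer (Suc j) q q * qpochhammer (n - j) q q
        = (qbinomial q n (Suc j) * qpochhammer (Suc j) q q * qpochhammer (n - Suc j) q q)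
          * (1 - q ^ (n - j))"
      by (simp add: qpochhammer_Suc_right mult_ac)
    also have "\<dots> = qpochhammer n q q * (1 - q ^ (n - j))"
      using Suc.IH[of "Suc j"] 3 by simp
    finally have right: "qbinomial q n (Suc j) * qpochhammer (Suc j) q q * qpochhammer (n - j) q q
        = qpochhammer n q q * (1 - q ^ (n - j))" .
    have "qbinomial q (Suc n) k * qpochhammer k q q * qpochhammer (Suc n - k) q q
        = qbinomial q n j * qpochhammer (Suc j) q q * qpochhammer (n - j) q q
          + q ^ Suc j * (qbinomial q n (Suc j) * qpochhammer (Suc j) q q * qpochhammer (n - j) q q)"
      using 3 by (simp add: algebra_simps)
    also have "\<dots> = qpochhammer n q q * (1 - q ^ (Suc j + (n - j)))"
      unfolding left right by (simp add: power_add algebra_simps)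
    also have "\<dots> = qpochhammer (Suc n) q q"
      using 3 by (simp add: qpochhammer_Suc_right)
    finally show ?thesis .
  qed simp_all
qed simp

lemma qbinomial_eq_qpochhammer_div:
  fixes q :: "'a::real_normed_field"
  assumes "norm q < 1" "k \<le> n"
  shows "qbinomial q n k = qpochhammer n q q / (qpochhammer k q q * qpochhammer (n - k) q q)"
  using qbinomial_qpochhammer[OF assms(2), of q] qpochhammer_nonzero[of q q] assms(1)
  by (simp add: field_simps)

theorem qbinomial_theorem:
  "qpochhammer n a q = (\<Sum>k\<le>n. qbinomial q n k * (- a) ^ k * q ^ (k choose 2))"
proof (induction n arbitrary: a)
  case (Suc n)
  have power_choose: "q ^ k * q ^ (k choose 2) = q ^ (Suc k choose 2)" for k
    by (simp add: numeral_2_eq_2 power_add[symmetric])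
  have minus_aq: "(- (a * q)) ^ k = q ^ k * (- a) ^ k" for k
    by (metis mult.commute mult_minus_left power_mult_distrib)
  define S where "S = (\<Sum>k\<le>n. qbinomial q n k * (- (a * q)) ^ k * q ^ (k choose 2))"
  have "S = (\<Sum>k\<le>Suc n. q ^ k * qbinomial q n k * (- a) ^ k * q ^ (k choose 2))"
    unfolding S_def by (simp add: qbinomial_eq_0 minus_aq mult_ac)
  also have "\<dots> = 1 + (\<Sum>k\<le>n. q ^ Suc k * qbinomial q n (Suc k) * (- a) ^ Suc k * q ^ (Suc k choose 2))"
    by (subst sum.atMost_Suc_shift) (simp add: binomial_eq_0)
  finally have S_shifted: "S = \<dots>" .
  have minus_a_S: "- a * S = (\<Sum>k\<le>n. qbinomial q n k * (- a) ^ Suc k * q ^ (Suc k choose 2))"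
    unfolding S_def sum_distrib_left
    by (intro sum.cong refl) (simp add: minus_aq power_choose[symmetric] mult_ac)
  have "qpochhammer (Suc n) a q = S + - a * S"
    unfolding qpochhammer_Suc Suc.IH S_def by (simp add: algebra_simps)
  also have "\<dots> = (\<Sum>k\<le>Suc n. qbinomial q (Suc n) k * (- a) ^ k * q ^ (k choose 2))"
    unfolding minus_a_S unfolding S_shifted by (subst sum.atMost_Suc_shift)
      (simp add: sum.distrib sum_subtractf sum_negf algebra_simps binomial_eq_0)
  finally show ?case .
qed (simp add: numeral_2_eq_2)

lemma qpochhammer_reflect:
  fixes x q :: "'a::field"
  assumes "x \<noteq> 0" "q \<noteq> 0"
  shows "qpochhammer n (x / q ^ n) q = (- x) ^ n / q ^ (Suc n choose 2) * qpochhammer n (q / x) q"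
proof (induction n)
  case (Suc n)
  have "qpochhammer (Suc n) (x / q ^ Suc n) q = (1 - x / q ^ Suc n) * qpochhammer n (x / q ^ n) q"
    using assms by (simp add: qpochhammer_Suc)
  also have "\<dots> = (1 - x / q ^ Suc n) * ((- x) ^ n / q ^ (Suc n choose 2) * qpochhammer n (q / x) q)"
    by (simp only: Suc.IH)
  also have "\<dots> = (- x) ^ Suc n / q ^ (Suc (Suc n) choose 2) * qpochhammer (Suc n) (q / x) q"
    using assms by (simp add: qpochhammer_Suc_right numeral_2_eq_2 power_add field_simps)
  finally show ?case .
qed (simp add: numeral_2_eq_2)

lemma UNIV_int_eq_nonneg_Un_neg: "(UNIV :: int set) = range int \<union> range (\<lambda>k. - int (Suc k))"
proof -
  have "z \<in> range int \<union> range (\<lambda>k. - int (Suc k))" for z :: int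
    by (cases z rule: int_cases) (use rangeI in blast)+
  then show ?thesis
    by blast
qed

lemma norm_summable_on_int_iff:
  fixes f :: "int \<Rightarrow> 'a::real_normed_vector"
  shows "(\<lambda>j. norm (f j)) summable_on UNIV \<longleftrightarrow>
           summable (\<lambda>k. norm (f (int k))) \<and> summable (\<lambda>k. norm (f (- int k)))"
    (is "?g summable_on UNIV \<longleftrightarrow> _")
proof -
  have reindex: "?g summable_on range h \<longleftrightarrow> summable (\<lambda>k. norm (f (h k)))"
    if "inj h" for h :: "nat \<Rightarrow> int"
    using that by (simp add: summable_on_reindex o_def summable_on_UNIV_nonneg_real_iff)
  have inj: "inj int" "inj (\<lambda>k::nat. - int k)"
    by (auto simp: inj_def)
  have "UNIV = range int \<union> range (\<lambda>k. - int k)"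
    using UNIV_int_eq_nonneg_Un_neg by (blast intro: rangeI)
  then have "?g summable_on UNIV \<longleftrightarrow> ?g summable_on range int \<and> ?g summable_on range (\<lambda>k. - int k)"
    by (metis summable_on_subset_banach summable_on_union subset_UNIV)
  then show ?thesis
    by (simp add: reindex inj)
qed

lemma infsum_int_split:
  fixes f :: "int \<Rightarrow> 'a::banach"
  assumes "f summable_on UNIV"
  shows "infsum f UNIV = (\<Sum>k. f (int k)) + (\<Sum>k. f (- int (Suc k)))"
proof -
  have half: "infsum f (range h) = (\<Sum>k. f (h k))" if "inj h" for h :: "nat \<Rightarrow> int"
  proof -
    have "f summable_on range h"
      by (rule summable_on_subset_banach[OF assms]) simp
    then have "(\<lambda>k. f (h k)) summable_on UNIV"
      using that by (simp add: summable_on_reindex o_def)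
    then have "(\<lambda>k. f (h k)) sums infsum (\<lambda>k. f (h k)) UNIV"
      by (intro has_sum_imp_sums has_sum_infsum)
    then show ?thesis
      using that by (simp add: infsum_reindex o_def sums_iff)
  qed
  have "infsum f UNIV = infsum f (range int) + infsum f (range (\<lambda>k. - int (Suc k)))"
    by (subst UNIV_int_eq_nonneg_Un_neg, rule infsum_Un_disjoint)
       (auto intro: summable_on_subset_banach[OF assms])
  then show ?thesis
    by (simp add: half inj_def)
qed

lemma filterlim_nat_int_add_const: "filterlim (\<lambda>n. nat (int n + j)) sequentially sequentially"
  unfolding filterlim_at_top
proof
  fix m :: nat
  show "eventually (\<lambda>n. m \<le> nat (int n + j)) sequentially"
    using eventually_ge_at_top[of "m + nat (- j)"] by eventually_elim auto
qed

lemma tannerys_theorem_int: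
  fixes g :: "nat \<Rightarrow> int \<Rightarrow> 'a::{real_normed_algebra, banach}"
  assumes lim: "\<And>j. (\<lambda>n. g n j) \<longlonglongrightarrow> h j"
    and bound: "\<And>n j. norm (g n j) \<le> M j"
    and M: "M summable_on UNIV"
  shows "(\<lambda>n. \<Sum>\<^sub>\<infinity>j. g n j) \<longlonglongrightarrow> (\<Sum>\<^sub>\<infinity>j. h j)"
proof -
  have h_bound: "norm (h j) \<le> M j" for j
    using bound by (intro LIMSEQ_le_const2[OF tendsto_norm[OF lim]]) auto
  have M_norm: "M j = norm (M j)" for j
    using order_trans[OF norm_ge_zero bound[of 0 j]] by simp
  then have "(\<lambda>j. norm (M j)) summable_on UNIV"
    using M by simp
  then have M_pos: "summable (\<lambda>k. M (int k))" and "summable (\<lambda>k. M (- int k))"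
    unfolding norm_summable_on_int_iff using M_norm by auto
  then have M_neg: "summable (\<lambda>k. M (- int (Suc k)))"
    using summable_Suc_iff[of "\<lambda>k. M (- int k)"] by blast
  have summable: "u summable_on UNIV" if "\<And>j. norm (u j) \<le> M j" for u :: "int \<Rightarrow> 'a"
    by (rule abs_summable_summable, rule Infinite_Sum.abs_summable_on_comparison_test'[OF M])
      (use that in auto)
  have tannery: "(\<lambda>n. \<Sum>k. g n (e k)) \<longlonglongrightarrow> (\<Sum>k. h (e k))"
    if "summable (\<lambda>k. M (e k))" for e :: "nat \<Rightarrow> int"
    using tannerys_theorem[of "\<lambda>k n. g n (e k)" "\<lambda>k. h (e k)" sequentially "\<lambda>k. M (e k)"]
      lim bound that by (auto intro: always_eventually)
  show ?thesis
    unfolding infsum_int_split[OF summable[OF bound]] infsum_int_split[OF summable[OF h_bound]]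
    by (intro tendsto_add tannery M_pos M_neg)
qed

lemma infsum_int_pairs_parity_split:
  fixes t :: "int \<times> int \<Rightarrow> 'a::banach"
  assumes "t summable_on UNIV"
  shows "infsum t UNIV = (\<Sum>\<^sub>\<infinity>(a, b). t (a + b + 1, a - b + 1)) + (\<Sum>\<^sub>\<infinity>(a, b). t (a + b + 1, a - b))"
proof -
  define E where "E = {p :: int \<times> int. even (fst p + snd p)}"
  have "bij_betw (\<lambda>(a, b). (a + b + 1, a - b + 1)) UNIV E"
    unfolding E_def
    by (rule bij_betwI[where g = "\<lambda>(m, n). ((m + n - 2) div 2, (m - n) div 2)"]) (auto, presburger+)
  moreover have "bij_betw (\<lambda>(a, b). (a + b + 1, a - b)) UNIV (- E)"
    unfolding E_def
    by (rule bij_betwI[where g = "\<lambda>(m, n). ((m + n - 1) div 2, (m - n - 1) div 2)"]) (auto, presburger+)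
  moreover have "infsum t UNIV = infsum t E + infsum t (- E)"
    by (subst infsum_Un_disjoint[symmetric]) (auto intro: summable_on_subset_banach[OF assms])
  ultimately show ?thesis
    by (simp add: infsum_reindex_bij_betw[symmetric] case_prod_unfold)
qed

lemma infsum_mult_infsum:
  fixes F :: "'i \<Rightarrow> 'a::{real_normed_div_algebra, banach}" and G :: "'j \<Rightarrow> 'a"
  assumes F: "(\<lambda>i. norm (F i)) summable_on A" and G: "(\<lambda>j. norm (G j)) summable_on B"
  shows "(\<lambda>(i, j). F i * G j) summable_on A \<times> B"
    and "(\<Sum>\<^sub>\<infinity>(i, j)\<in>A \<times> B. F i * G j) = infsum F A * infsum G B"
proof -
  have "(\<lambda>x. norm (case x of (i, j) \<Rightarrow> F i * G j)) summable_on A \<times> B"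
  proof (subst Infinite_Sum.abs_summable_on_Sigma_iff, intro conjI ballI)
    show "(\<lambda>j. norm (case (i, j) of (i, j) \<Rightarrow> F i * G j)) summable_on B" for i
      using summable_on_cmult_right[OF G, of "norm (F i)"] by (simp add: norm_mult)
    have "(\<lambda>i. norm (F i) * (\<Sum>\<^sub>\<infinity>j\<in>B. norm (G j))) summable_on A"
      using F by (rule summable_on_cmult_left)
    moreover have "norm (\<Sum>\<^sub>\<infinity>j\<in>B. norm (F i * G j)) = norm (F i) * (\<Sum>\<^sub>\<infinity>j\<in>B. norm (G j))" for i
      by (simp add: norm_mult infsum_cmult_right[OF G] infsum_nonneg)
    ultimately show "(\<lambda>i. norm (\<Sum>\<^sub>\<infinity>j\<in>B. norm (case (i, j) of (i, j) \<Rightarrow> F i * G j))) summable_on A"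
      by simp
  qed
  then show summable: "(\<lambda>(i, j). F i * G j) summable_on A \<times> B"
    by (rule abs_summable_summable)
  have "(\<Sum>\<^sub>\<infinity>(i, j)\<in>A \<times> B. F i * G j) = (\<Sum>\<^sub>\<infinity>i\<in>A. \<Sum>\<^sub>\<infinity>j\<in>B. F i * G j)"
    using infsum_Sigma_banach[OF summable] by (simp add: case_prod_beta)
  also have "\<dots> = infsum F A * infsum G B"
    using abs_summable_summable[OF F] abs_summable_summable[OF G]
    by (simp add: infsum_cmult_right infsum_cmult_left)
  finally show "(\<Sum>\<^sub>\<infinity>(i, j)\<in>A \<times> B. F i * G j) = infsum F A * infsum G B" .
qed

section \<open>Jacobi's triple product\<close>

definition theta_series :: "complex \<Rightarrow> complex \<Rightarrow> int \<Rightarrow> complex" where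
  "theta_series w q c = (\<Sum>\<^sub>\<infinity>n::int. w powi n * q powi (n * n + c * n))"

(* Ramanujan's f(-x, -s^2/x). *)
definition theta :: "complex \<Rightarrow> complex \<Rightarrow> complex" where
  "theta s x = (\<Sum>\<^sub>\<infinity>n::int. (- x) powi n * s powi (n * n - n))"

lemma summable_power_self_decay:
  fixes r R :: real and d :: int
  assumes "0 < r" "r < 1"
  shows "summable (\<lambda>k::nat. (R * r powi (int k + d)) ^ k)"
proof (rule summable_comparison_test_ev)
  have "(\<lambda>k. R * r powi d * r ^ k) \<longlonglongrightarrow> R * r powi d * 0"
    using assms by (intro tendsto_mult tendsto_const LIMSEQ_power_zero) auto
  moreover have "R * r powi d * r ^ k = R * r powi (int k + d)" for k :: nat
    using assms(1) by (simp add: power_int_add)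
  ultimately have "(\<lambda>k. R * r powi (int k + d)) \<longlonglongrightarrow> 0"
    by simp
  from tendsto_norm_zero[OF this]
  have "eventually (\<lambda>k. norm (R * r powi (int k + d)) < 1 / 2) sequentially"
    by (rule order_tendstoD(2)) simp
  then show "eventually (\<lambda>k. norm ((R * r powi (int k + d)) ^ k) \<le> (1 / 2) ^ k) sequentially"
    by eventually_elim (auto simp: power_abs intro!: power_mono)
  show "summable (\<lambda>k::nat. (1 / 2 :: real) ^ k)"
    by (rule summable_geometric) simp
qed

lemma theta_series_norm_summable:
  fixes w q :: complex
  assumes "norm q < 1" "q \<noteq> 0" "w \<noteq> 0"
  shows "(\<lambda>n::int. norm (w powi n * q powi (n * n + c * n))) summable_on UNIV"
  unfolding norm_summable_on_int_iff
proof
  have r: "0 < norm q" "norm q < 1"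
    using assms by auto
  have "int k * int k + c * int k = (int k + c) * int k" for k
    by (simp add: algebra_simps)
  then have "norm (w powi int k * q powi (int k * int k + c * int k))
      = (norm w * norm q powi (int k + c)) ^ k" for k :: nat
    by (simp only: norm_mult norm_power norm_power_int power_int_mult power_int_of_nat power_mult_distrib)
  then show "summable (\<lambda>k. norm (w powi int k * q powi (int k * int k + c * int k)))"
    using summable_power_self_decay[OF r] by simp
  have "- int k * - int k + c * - int k = (int k + - c) * int k" for k
    by (simp add: algebra_simps)
  then have "norm (w powi (- int k) * q powi (- int k * - int k + c * - int k))
      = (inverse (norm w) * norm q powi (int k + - c)) ^ k" for k :: nat
    by (simp only: norm_mult norm_power norm_power_int power_int_mult power_int_of_nat power_mult_distrib
        power_int_minus power_inverse norm_inverse)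
  then show "summable (\<lambda>k. norm (w powi (- int k) * q powi (- int k * - int k + c * - int k)))"
    using summable_power_self_decay[OF r, of "inverse (norm w)" "- c"] by simp
qed

lemma theta_norm_summable:
  fixes s x :: complex
  assumes "norm s < 1" "s \<noteq> 0" "x \<noteq> 0"
  shows "(\<lambda>n::int. norm ((- x) powi n * s powi (n * n - n))) summable_on UNIV"
  using theta_series_norm_summable[of s "- x" "- 1"] assms by simp

lemma double_choose_two: "2 * (m choose 2) = m * (m - 1)"
proof -
  have "even (m * (m - 1))"
    by (cases "even m") auto
  then show ?thesis
    by (simp add: choose_two)
qed

lemma power_square_choose_two: "(s\<^sup>2) ^ (m choose 2) = s ^ (m * (m - 1))"
  for s :: "'a::monoid_mult"
  by (simp only: power_mult[symmetric] double_choose_two)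

(* Expand (x / p^n; p)_2n with p = s^2 by the q-binomial theorem and reflect its first n factors. *)
lemma jacobi_triple_product_finite:
  fixes s x :: "'a::field"
  assumes "s \<noteq> 0" "x \<noteq> 0"
  shows "qpochhammer n x (s\<^sup>2) * qpochhammer n (s\<^sup>2 / x) (s\<^sup>2)
       = (\<Sum>j\<in>{- int n..int n}.
            qbinomial (s\<^sup>2) (2 * n) (nat (j + int n)) * ((- x) powi j * s powi (j * j - j)))"
proof -
  define p where "p = s\<^sup>2"
  define a where "a = x / p ^ n"
  have p0: "p \<noteq> 0"
    using assms by (simp add: p_def)
  have term_eq: "p ^ (Suc n choose 2) / (- x) ^ n * ((- a) ^ k * p ^ (k choose 2))
      = (- x) powi (int k - int n) * s powi ((int k - int n) * (int k - int n) - (int k - int n))" for k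
  proof -
    have "(p ^ n) ^ k = s ^ (2 * n * k)"
      unfolding p_def by (simp only: power_mult)
    then have "(- a) ^ k = (- x) ^ k / s ^ (2 * n * k)"
      unfolding a_def by (simp only: minus_divide_left power_divide)
    moreover have "(int k - int n) * (int k - int n) - (int k - int n)
        = int (Suc n * (Suc n - 1)) + int (k * (k - 1)) - int (2 * n * k)"
      by (cases k) (simp_all add: algebra_simps)
    then have exponent: "s powi ((int k - int n) * (int k - int n) - (int k - int n))
        = s ^ (Suc n * (Suc n - 1)) * s ^ (k * (k - 1)) / s ^ (2 * n * k)"
      using assms(1) by (simp only: power_int_add power_int_diff power_int_of_nat simp_thms)
    ultimately show ?thesis
      using assms unfolding p_def power_square_choose_two exponent
      by (simp add: power_int_diff field_simps)
  qed
  have "qpochhammer (2 * n) a p = qpochhammer n a p * qpochhammer n x p"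
    unfolding mult_2 qpochhammer_add using p0 by (simp add: a_def)
  also have "qpochhammer n a p = (- x) ^ n / p ^ (Suc n choose 2) * qpochhammer n (p / x) p"
    unfolding a_def using assms(2) p0 by (rule qpochhammer_reflect)
  finally have "qpochhammer n x p * qpochhammer n (p / x) p
      = p ^ (Suc n choose 2) / (- x) ^ n * qpochhammer (2 * n) a p"
    using assms p0 by (simp add: field_simps)
  also have "\<dots> = (\<Sum>k\<le>2 * n. qbinomial p (2 * n) k *
      ((- x) powi (int k - int n) * s powi ((int k - int n) * (int k - int n) - (int k - int n))))"
    unfolding qbinomial_theorem sum_distrib_left term_eq[symmetric] by (simp add: mult_ac)
  also have "\<dots> = (\<Sum>j\<in>{- int n..int n}.
      qbinomial p (2 * n) (nat (j + int n)) * ((- x) powi j * s powi (j * j - j)))"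
    by (rule sum.reindex_bij_witness[of _ "\<lambda>j. nat (j + int n)" "\<lambda>k. int k - int n"]) auto
  finally show ?thesis
    unfolding p_def .
qed

lemma tendsto_symmetric_sum_div:
  fixes Q :: "nat \<Rightarrow> 'a::{real_normed_field, banach}" and T :: "int \<Rightarrow> 'a"
  assumes Q: "Q \<longlonglongrightarrow> P" "P \<noteq> 0" and T: "(\<lambda>j. norm (T j)) summable_on UNIV"
  shows "(\<lambda>n. \<Sum>j\<in>{- int n..int n}. T j / (Q (nat (int n + j)) * Q (nat (int n - j))))
           \<longlonglongrightarrow> (\<Sum>\<^sub>\<infinity>j. T j) / (P * P)"
proof -
  define g where "g n j = (if j \<in> {- int n..int n}
    then T j / (Q (nat (int n + j)) * Q (nat (int n - j))) else 0)" for n j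
  obtain K where K: "\<And>m. norm (inverse (Q m)) \<le> K"
    using BseqE[OF convergent_imp_Bseq[OF convergentI[OF tendsto_inverse[OF Q]]]] by blast
  have "(\<lambda>n. \<Sum>\<^sub>\<infinity>j. g n j) \<longlonglongrightarrow> (\<Sum>\<^sub>\<infinity>j. T j / (P * P))"
  proof (rule tannerys_theorem_int)
    fix j
    have "(\<lambda>n. Q (nat (int n + j))) \<longlonglongrightarrow> P" "(\<lambda>n. Q (nat (int n - j))) \<longlonglongrightarrow> P"
      using filterlim_compose[OF Q(1) filterlim_nat_int_add_const, of j]
        filterlim_compose[OF Q(1) filterlim_nat_int_add_const, of "- j"] by simp_all
    then have "(\<lambda>n. T j / (Q (nat (int n + j)) * Q (nat (int n - j)))) \<longlonglongrightarrow> T j / (P * P)"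
      using Q(2) by (intro tendsto_intros) auto
    moreover have "eventually (\<lambda>n. j \<in> {- int n..int n}) sequentially"
      using eventually_ge_at_top[of "nat \<bar>j\<bar>"] by eventually_elim auto
    ultimately show "(\<lambda>n. g n j) \<longlonglongrightarrow> T j / (P * P)"
      by (elim Lim_transform_eventually eventually_mono) (simp add: g_def)
  next
    fix n j
    have "norm (T j / (Q a * Q b)) \<le> K * K * norm (T j)" for a b
    proof -
      have "norm (inverse (Q a) * inverse (Q b)) \<le> K * K"
        unfolding norm_mult using K[of a] K[of b] order_trans[OF norm_ge_zero K]
        by (intro mult_mono) auto
      then have "norm (T j) * norm (inverse (Q a) * inverse (Q b)) \<le> norm (T j) * (K * K)"
        by (rule mult_left_mono) simp
      then show ?thesis
        by (simp add: divide_inverse norm_mult mult_ac)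
    qed
    then show "norm (g n j) \<le> K * K * norm (T j)"
      using order_trans[OF norm_ge_zero K] by (simp add: g_def)
  next
    show "(\<lambda>j. K * K * norm (T j)) summable_on UNIV"
      using T by (rule summable_on_cmult_right)
  qed
  moreover have "(\<Sum>\<^sub>\<infinity>j. g n j)
      = (\<Sum>j\<in>{- int n..int n}. T j / (Q (nat (int n + j)) * Q (nat (int n - j))))" for n
    by (subst infsum_cong_neutral[where T = "{- int n..int n}"]) (auto simp: g_def)
  ultimately show ?thesis
    by (simp add: divide_inverse infsum_cmult_left')
qed

theorem jacobi_triple_product:
  fixes s x :: complex
  assumes s: "norm s < 1" "s \<noteq> 0" and x: "x \<noteq> 0"
  shows "theta s x
       = qpochhammer_inf x (s\<^sup>2) * qpochhammer_inf (s\<^sup>2 / x) (s\<^sup>2) * qpochhammer_inf (s\<^sup>2) (s\<^sup>2)"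
proof -
  define p where "p = s\<^sup>2"
  define P where "P = qpochhammer_inf p p"
  define Q where "Q m = qpochhammer m p p" for m
  define T where "T j = (- x) powi j * s powi (j * j - j)" for j :: int
  have p: "norm p < 1"
    unfolding p_def using s(1) by (rule norm_power_less_one) simp
  have P0: "P \<noteq> 0"
    unfolding P_def using p p by (rule qpochhammer_inf_nonzero)
  have QP: "Q \<longlonglongrightarrow> P"
    unfolding Q_def P_def using p by (rule qpochhammer_tendsto)
  have finite: "qpochhammer n x p * qpochhammer n (p / x) p
      = Q (2 * n) * (\<Sum>j\<in>{- int n..int n}. T j / (Q (nat (int n + j)) * Q (nat (int n - j))))" for n
  proof -
    have "qbinomial p (2 * n) (nat (j + int n))
        = Q (2 * n) / (Q (nat (int n + j)) * Q (nat (int n - j)))"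
      if "j \<in> {- int n..int n}" for j
    proof -
      have "nat (j + int n) \<le> 2 * n" "2 * n - nat (j + int n) = nat (int n - j)"
        using that by auto
      then show ?thesis
        using qbinomial_eq_qpochhammer_div[OF p] by (simp add: Q_def add.commute)
    qed
    then show ?thesis
      using jacobi_triple_product_finite[OF s(2) x, of n] by (simp add: p_def T_def sum_distrib_left)
  qed
  have "(\<lambda>n. Q (2 * n)) \<longlonglongrightarrow> P"
    using LIMSEQ_subseq_LIMSEQ[OF QP, of "\<lambda>n. 2 * n"] by (simp add: strict_mono_def o_def)
  then have "(\<lambda>n. Q (2 * n) * (\<Sum>j\<in>{- int n..int n}. T j / (Q (nat (int n + j)) * Q (nat (int n - j)))))
      \<longlonglongrightarrow> P * (theta s x / (P * P))"
    unfolding T_def theta_def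
    by (intro tendsto_mult tendsto_symmetric_sum_div QP P0 theta_norm_summable s x)
  then have "(\<lambda>n. qpochhammer n x p * qpochhammer n (p / x) p) \<longlonglongrightarrow> P * (theta s x / (P * P))"
    by (simp only: finite)
  moreover have "(\<lambda>n. qpochhammer n x p * qpochhammer n (p / x) p)
      \<longlonglongrightarrow> qpochhammer_inf x p * qpochhammer_inf (p / x) p"
    by (intro tendsto_mult qpochhammer_tendsto p)
  ultimately have "qpochhammer_inf x p * qpochhammer_inf (p / x) p = P * (theta s x / (P * P))"
    using LIMSEQ_unique by blast
  then show ?thesis
    using P0 by (simp add: p_def P_def field_simps)
qed

section \<open>Functional equations and the three-term identity\<close>

lemma power_int_reciprocal:
  fixes a b :: "'a::field"
  assumes "a * b = 1"
  shows "a powi n = b powi (- n)"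
proof -
  have "inverse b = a"
    using assms by (intro inverse_unique) (simp add: mult.commute)
  then show ?thesis
    by (simp add: power_int_minus flip: power_int_inverse)
qed

lemma power_int_double: "z powi (2 * k) = (z\<^sup>2) powi k"
  for z :: "'a::division_ring"
  by (simp add: power_int_mult)

lemma theta_inverse:
  fixes s z :: complex
  assumes "s \<noteq> 0" "z \<noteq> 0"
  shows "theta s (1 / z) = - (1 / z) * theta s z"
proof -
  have "theta s (1 / z) = (\<Sum>\<^sub>\<infinity>k::int. (- (1 / z)) powi (1 - k) * s powi ((1 - k) * (1 - k) - (1 - k)))"
    unfolding theta_def by (rule infsum_reindex_bij_witness[of _ "\<lambda>k. 1 - k" "\<lambda>k. 1 - k"]) auto
  also have "\<dots> = (\<Sum>\<^sub>\<infinity>k::int. - (1 / z) * ((- z) powi k * s powi (k * k - k)))"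
  proof (rule infsum_cong)
    fix k :: int
    have "(- (1 / z)) powi (1 - k) = (- z) powi (k - 1)"
      using power_int_reciprocal[of "- (1 / z)" "- z"] assms(2) by simp
    also have "\<dots> = - (1 / z) * (- z) powi k"
      using assms(2) by (simp add: power_int_diff)
    finally show "(- (1 / z)) powi (1 - k) * s powi ((1 - k) * (1 - k) - (1 - k))
        = - (1 / z) * ((- z) powi k * s powi (k * k - k))"
      by (simp add: algebra_simps)
  qed
  also have "\<dots> = - (1 / z) * theta s z"
    unfolding theta_def by (rule infsum_cmult_right')
  finally show ?thesis .
qed

lemma theta_symmetric:
  fixes s z :: complex
  assumes "s \<noteq> 0" "z \<noteq> 0"
  shows "theta s (s\<^sup>2 / z) = theta s z"
proof -
  have "theta s (s\<^sup>2 / z) = (\<Sum>\<^sub>\<infinity>k::int. (- (s\<^sup>2 / z)) powi (- k) * s powi (- k * - k - - k))"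
    unfolding theta_def by (rule infsum_reindex_bij_witness[of _ uminus uminus]) auto
  also have "\<dots> = theta s z"
    unfolding theta_def
  proof (rule infsum_cong)
    fix k :: int
    have "- (s\<^sup>2 / z) * (- z / s\<^sup>2) = 1"
      using assms by simp
    from power_int_reciprocal[OF this, of "- k"]
    have reciprocal: "(- (s\<^sup>2 / z)) powi (- k) = (- z) powi k / (s\<^sup>2) powi k"
      by (simp only: minus_minus power_int_divide_distrib)
    have "s powi (k * k - k) * (s\<^sup>2) powi k = s powi (k * k - k) * s powi (2 * k)"
      by (simp only: power_int_double)
    also have "\<dots> = s powi (k * k - k + 2 * k)"
      using assms(1) by (simp flip: power_int_add)
    also have "\<dots> = s powi (- k * - k - - k)"
      by (simp add: algebra_simps)
    finally have exponent: "s powi (- k * - k - - k) = s powi (k * k - k) * (s\<^sup>2) powi k" ..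
    show "(- (s\<^sup>2 / z)) powi (- k) * s powi (- k * - k - - k) = (- z) powi k * s powi (k * k - k)"
      unfolding reciprocal exponent using assms(1) by simp
  qed
  finally show ?thesis .
qed

lemma theta_term_mult:
  fixes x y s :: "'a::field"
  assumes "x \<noteq> 0" "y \<noteq> 0" "s \<noteq> 0"
  shows "((- (x * y)) powi m * s powi (m * m - m)) * ((- (x / y)) powi n * s powi (n * n - n))
       = (- 1) powi (m + n) * x powi (m + n) * y powi (m - n) * s powi (m * m - m + (n * n - n))"
proof -
  have "- (x * y) = (- 1) * x * y" "- (x / y) = (- 1) * x * inverse y"
    by (simp_all add: divide_inverse)
  then have "(- (x * y)) powi m * (- (x / y)) powi n
      = ((- 1) powi m * (- 1) powi n) * (x powi m * x powi n) * (y powi m / y powi n)"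
    by (simp only: power_int_mult_distrib power_int_inverse) (simp add: divide_inverse mult_ac)
  also have "\<dots> = (- 1) powi (m + n) * x powi (m + n) * y powi (m - n)"
    using assms by (simp add: power_int_add power_int_diff)
  finally show ?thesis
    using assms(3) by (simp add: power_int_add mult_ac)
qed

lemma theta_terms_mult_even:
  fixes x y s :: "'a::field"
  assumes "x \<noteq> 0" "y \<noteq> 0" "s \<noteq> 0"
  shows "((- (x * y)) powi (a + b + 1) * s powi ((a + b + 1) * (a + b + 1) - (a + b + 1)))
           * ((- (x / y)) powi (a - b + 1) * s powi ((a - b + 1) * (a - b + 1) - (a - b + 1)))
         = x\<^sup>2 * ((x\<^sup>2) powi a * (s\<^sup>2) powi (a * a + 1 * a) * ((y\<^sup>2) powi b * (s\<^sup>2) powi (b * b + 0 * b)))"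
proof -
  have "(a + b + 1) + (a - b + 1) = 2 * (a + 1)" "(a + b + 1) - (a - b + 1) = 2 * b"
    "(a + b + 1) * (a + b + 1) - (a + b + 1) + ((a - b + 1) * (a - b + 1) - (a - b + 1))
      = 2 * ((a * a + 1 * a) + (b * b + 0 * b))"
    by (simp_all add: algebra_simps)
  then have "((- (x * y)) powi (a + b + 1) * s powi ((a + b + 1) * (a + b + 1) - (a + b + 1)))
        * ((- (x / y)) powi (a - b + 1) * s powi ((a - b + 1) * (a - b + 1) - (a - b + 1)))
      = ((- 1)\<^sup>2) powi (a + 1) * (x\<^sup>2) powi (a + 1) * (y\<^sup>2) powi b
        * (s\<^sup>2) powi ((a * a + 1 * a) + (b * b + 0 * b))"
    by (simp only: theta_term_mult[OF assms] power_int_double)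
  then show ?thesis
    using assms by (simp add: power_int_add mult_ac)
qed

lemma theta_terms_mult_odd:
  fixes x y s :: "'a::field"
  assumes "x \<noteq> 0" "y \<noteq> 0" "s \<noteq> 0"
  shows "((- (x * y)) powi (a + b + 1) * s powi ((a + b + 1) * (a + b + 1) - (a + b + 1)))
           * ((- (x / y)) powi (a - b) * s powi ((a - b) * (a - b) - (a - b)))
         = - (x * y) * ((x\<^sup>2) powi a * (s\<^sup>2) powi (a * a + 0 * a) * ((y\<^sup>2) powi b * (s\<^sup>2) powi (b * b + 1 * b)))"
proof -
  have "(a + b + 1) + (a - b) = 2 * a + 1" "(a + b + 1) - (a - b) = 2 * b + 1"
    "(a + b + 1) * (a + b + 1) - (a + b + 1) + ((a - b) * (a - b) - (a - b))
      = 2 * ((a * a + 0 * a) + (b * b + 1 * b))"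
    by (simp_all add: algebra_simps)
  then have "((- (x * y)) powi (a + b + 1) * s powi ((a + b + 1) * (a + b + 1) - (a + b + 1)))
        * ((- (x / y)) powi (a - b) * s powi ((a - b) * (a - b) - (a - b)))
      = (- 1) powi (2 * a + 1) * x powi (2 * a + 1) * y powi (2 * b + 1)
        * (s\<^sup>2) powi ((a * a + 0 * a) + (b * b + 1 * b))"
    by (simp only: theta_term_mult[OF assms] power_int_double)
  then show ?thesis
    using assms by (simp add: power_int_add_1 power_int_double) (simp add: power_int_add mult_ac)
qed

lemma theta_mult_theta:
  fixes s x y :: complex
  assumes s: "norm s < 1" "s \<noteq> 0" and xy: "x \<noteq> 0" "y \<noteq> 0"
  shows "theta s (x * y) * theta s (x / y)
       = x\<^sup>2 * theta_series (x\<^sup>2) (s\<^sup>2) 1 * theta_series (y\<^sup>2) (s\<^sup>2) 0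
         - x * y * theta_series (x\<^sup>2) (s\<^sup>2) 0 * theta_series (y\<^sup>2) (s\<^sup>2) 1"
proof -
  define t where "t = (\<lambda>(m, n).
    ((- (x * y)) powi m * s powi (m * m - m)) * ((- (x / y)) powi n * s powi (n * n - n)))"
  have s2: "norm (s\<^sup>2) < 1" "s\<^sup>2 \<noteq> 0"
    using s norm_power_less_one[OF s(1), of 2] by simp_all
  have product: "(\<Sum>\<^sub>\<infinity>(a, b). u powi a * (s\<^sup>2) powi (a * a + c * a) * (v powi b * (s\<^sup>2) powi (b * b + d * b)))
      = theta_series u (s\<^sup>2) c * theta_series v (s\<^sup>2) d"
    if "u \<noteq> 0" "v \<noteq> 0" for u v c d
    using infsum_mult_infsum(2)[OF theta_series_norm_summable[OF s2 that(1)]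
        theta_series_norm_summable[OF s2 that(2)]]
    by (simp add: theta_series_def)
  have "t summable_on UNIV" and t_sum: "infsum t UNIV = theta s (x * y) * theta s (x / y)"
    using infsum_mult_infsum[OF theta_norm_summable[OF s, of "x * y"] theta_norm_summable[OF s, of "x / y"]]
      xy
    by (simp_all add: t_def theta_def)
  moreover have "(\<Sum>\<^sub>\<infinity>(a, b). t (a + b + 1, a - b + 1))
      = x\<^sup>2 * (theta_series (x\<^sup>2) (s\<^sup>2) 1 * theta_series (y\<^sup>2) (s\<^sup>2) 0)"
    unfolding t_def case_prod_conv theta_terms_mult_even[OF xy s(2)]
    using xy by (simp add: infsum_cmult_right' case_prod_unfold flip: product)
  moreover have "(\<Sum>\<^sub>\<infinity>(a, b). t (a + b + 1, a - b))
      = - (x * y) * (theta_series (x\<^sup>2) (s\<^sup>2) 0 * theta_series (y\<^sup>2) (s\<^sup>2) 1)"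
    unfolding t_def case_prod_conv theta_terms_mult_odd[OF xy s(2)]
    using xy by (simp add: infsum_uminus infsum_cmult_right' case_prod_unfold flip: product)
  ultimately show ?thesis
    using infsum_int_pairs_parity_split[of t] by (simp add: algebra_simps)
qed

lemma theta_three_term:
  fixes s x y u v :: complex
  assumes s: "norm s < 1" "s \<noteq> 0" and nz: "x \<noteq> 0" "y \<noteq> 0" "u \<noteq> 0" "v \<noteq> 0"
  shows "v * (theta s (x * y) * theta s (x / y) * (theta s (u * v) * theta s (u / v))
              - theta s (x * v) * theta s (x / v) * (theta s (u * y) * theta s (u / y)))
       = - u * (theta s (x * u) * theta s (x / u) * (theta s (v * y) * theta s (v / y)))"
proof -
  define A where "A z = theta_series (z\<^sup>2) (s\<^sup>2) 0" for z
  define B where "B z = theta_series (z\<^sup>2) (s\<^sup>2) 1" for z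
  have F: "theta s (a * b) * theta s (a / b) = a\<^sup>2 * B a * A b - a * b * A a * B b"
    if "a \<noteq> 0" "b \<noteq> 0" for a b
    unfolding A_def B_def using theta_mult_theta[OF s that] .
  show ?thesis
    unfolding F[OF nz(1) nz(2)] F[OF nz(3) nz(4)] F[OF nz(1) nz(4)]
      F[OF nz(3) nz(2)] F[OF nz(1) nz(3)] F[OF nz(4) nz(2)]
    by (simp add: algebra_simps power2_eq_square)
qed

lemma theta_cube_identity:
  fixes q :: complex
  assumes q: "norm q < 1" "q \<noteq> 0"
  shows "theta (q ^ 3) q ^ 2 * theta (q ^ 3) (q\<^sup>2) ^ 2
         + theta (q ^ 3) (- q) ^ 2 * theta (q ^ 3) (- (q\<^sup>2)) ^ 2
       = theta (q ^ 3) (- (q ^ 3)) ^ 2 * theta (q ^ 3) (- (q\<^sup>2)) * theta (q ^ 3) (- 1)"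
proof -
  define s where "s = q ^ 3"
  have s: "norm s < 1" "s \<noteq> 0"
    using q norm_power_less_one[OF q(1), of 3] by (simp_all add: s_def)
  have reflect: "theta s (q ^ 4) = theta s (q\<^sup>2)" "theta s (- (q ^ 4)) = theta s (- (q\<^sup>2))"
    using theta_symmetric[OF s(2), of "q\<^sup>2"] theta_symmetric[OF s(2), of "- (q\<^sup>2)"] q(2)
    by (simp_all add: s_def field_simps eval_nat_numeral)
  have inverse: "theta s (1 / z) = - (1 / z) * theta s z" if "z \<noteq> 0" for z
    using theta_inverse[OF s(2) that] .
  have "- q \<noteq> 0" "- (q ^ 3) \<noteq> 0"
    using q(2) by simp_all
  note inverse = inverse[OF q(2)] inverse[OF this(1)] inverse[OF this(2)]
  have "- (q ^ 3) * q = - (q ^ 4)" "- (q ^ 3) / q = - (q\<^sup>2)" "- (q ^ 3) * - q = q ^ 4"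
    "- (q ^ 3) / - q = q\<^sup>2" "q * - q = - (q\<^sup>2)" "q / - q = - 1"
    using q(2) by (simp_all add: field_simps eval_nat_numeral)
  with theta_three_term[OF s, of 1 "- q" "- (q ^ 3)" q] q(2)
  have "q * (theta s (- q) * theta s (1 / - q) * (theta s (- (q ^ 4)) * theta s (- (q\<^sup>2)))
             - theta s q * theta s (1 / q) * (theta s (q ^ 4) * theta s (q\<^sup>2)))
      = q ^ 3 * (theta s (- (q ^ 3)) * theta s (1 / - (q ^ 3)) * (theta s (- (q\<^sup>2)) * theta s (- 1)))"
    by simp
  then have "q * (theta s q ^ 2 * theta s (q\<^sup>2) ^ 2 + theta s (- q) ^ 2 * theta s (- (q\<^sup>2)) ^ 2)
      = q * (theta s (- s) ^ 2 * theta s (- (q\<^sup>2)) * theta s (- 1))"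
    unfolding reflect inverse using q(2)
    by (simp add: s_def field_simps power2_eq_square eval_nat_numeral)
  then show ?thesis
    using q(2) by (simp add: s_def)
qed

section \<open>The dissection modulo 6\<close>

lemma f_sextic_dissection:
  fixes q :: complex
  assumes q: "norm q < 1"
  defines "P k \<equiv> qpochhammer_inf (q ^ k) (q ^ 6)" and "M k \<equiv> qpochhammer_inf (- (q ^ k)) (q ^ 6)"
  shows "f 1 q = P 1 * P 5 * (P 2 * P 4) * P 3 * P 6"
    and "f 2 q = P 2 * P 4 * P 6"
    and "f 3 q = P 3 * P 6"
    and "f 4 q = P 2 * P 4 * (M 2 * M 4) * P 6 * M 6"
    and "f 6 q = P 6"
    and "f 12 q = P 6 * M 6"
    and "qpochhammer_inf (- q) q = M 1 * M 5 * (M 2 * M 4) * M 3 * M 6"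
    and "qpochhammer_inf (- (q ^ 3)) (q ^ 3) = M 3 * M 6"
proof -
  have dissect: "qpochhammer_inf a (q ^ m) = (\<Prod>r<k. qpochhammer_inf (a * (q ^ m) ^ r) ((q ^ m) ^ k))"
    if "0 < m" "0 < k" for a m k
    using qpochhammer_inf_dissect[OF norm_power_less_one[OF q that(1)] that(2)] .
  have PM: "P k * M k = qpochhammer_inf (q ^ (2 * k)) (q ^ 12)" for k
    using qpochhammer_inf_mult_uminus[OF norm_power_less_one[OF q, of 6], of "q ^ k"]
    by (simp add: P_def M_def power_mult[symmetric] mult.commute)
  show "f 1 q = P 1 * P 5 * (P 2 * P 4) * P 3 * P 6"
    using dissect[of 1 6 q] by (simp add: f_eq_qpochhammer_inf P_def eval_nat_numeral mult_ac)
  show "f 2 q = P 2 * P 4 * P 6"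
    using dissect[of 2 3 "q ^ 2"] by (simp add: f_eq_qpochhammer_inf P_def eval_nat_numeral mult_ac)
  show "f 3 q = P 3 * P 6"
    using dissect[of 3 2 "q ^ 3"] by (simp add: f_eq_qpochhammer_inf P_def eval_nat_numeral mult_ac)
  show "f 6 q = P 6"
    by (simp add: f_eq_qpochhammer_inf P_def)
  show "f 12 q = P 6 * M 6"
    by (simp add: f_eq_qpochhammer_inf PM)
  show "f 4 q = P 2 * P 4 * (M 2 * M 4) * P 6 * M 6"
    using qpochhammer_inf_dissect[OF norm_power_less_one[OF q], of 4 3 "q ^ 4"]
      PM[of 2] PM[of 4] PM[of 6]
    by (simp add: f_eq_qpochhammer_inf eval_nat_numeral mult_ac)
  show "qpochhammer_inf (- q) q = M 1 * M 5 * (M 2 * M 4) * M 3 * M 6"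
    using dissect[of 1 6 "- q"] by (simp add: M_def eval_nat_numeral mult_ac)
  show "qpochhammer_inf (- (q ^ 3)) (q ^ 3) = M 3 * M 6"
    using dissect[of 3 2 "- (q ^ 3)"] by (simp add: M_def eval_nat_numeral mult_ac)
qed

lemma theta_cube_values:
  fixes q :: complex
  assumes q: "norm q < 1" "q \<noteq> 0"
  defines "P k \<equiv> qpochhammer_inf (q ^ k) (q ^ 6)" and "M k \<equiv> qpochhammer_inf (- (q ^ k)) (q ^ 6)"
  shows "theta (q ^ 3) q = P 1 * P 5 * P 6"
    and "theta (q ^ 3) (q\<^sup>2) = P 2 * P 4 * P 6"
    and "theta (q ^ 3) (- q) = M 1 * M 5 * P 6"
    and "theta (q ^ 3) (- (q\<^sup>2)) = M 2 * M 4 * P 6"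
    and "theta (q ^ 3) (- (q ^ 3)) = M 3 ^ 2 * P 6"
    and "theta (q ^ 3) (- 1) = 2 * M 6 ^ 2 * P 6"
proof -
  have jtp: "theta (q ^ 3) z = qpochhammer_inf z (q ^ 6) * qpochhammer_inf (q ^ 6 / z) (q ^ 6) * P 6"
    if "z \<noteq> 0" for z
    using jacobi_triple_product[OF norm_power_less_one[OF q(1)] _ that, of 3] q(2)
    by (simp add: P_def flip: power_mult)
  show "theta (q ^ 3) q = P 1 * P 5 * P 6"
    using jtp[of q] q(2) by (simp add: P_def eval_nat_numeral)
  show "theta (q ^ 3) (q\<^sup>2) = P 2 * P 4 * P 6"
    using jtp[of "q\<^sup>2"] q(2) by (simp add: P_def eval_nat_numeral)
  show "theta (q ^ 3) (- q) = M 1 * M 5 * P 6"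
    using jtp[of "- q"] q(2) by (simp add: M_def eval_nat_numeral)
  show "theta (q ^ 3) (- (q\<^sup>2)) = M 2 * M 4 * P 6"
    using jtp[of "- (q\<^sup>2)"] q(2) by (simp add: M_def eval_nat_numeral)
  show "theta (q ^ 3) (- (q ^ 3)) = M 3 ^ 2 * P 6"
    using jtp[of "- (q ^ 3)"] q(2) by (simp add: M_def eval_nat_numeral power2_eq_square)
  have "qpochhammer_inf (- 1) (q ^ 6) = 2 * M 6"
    using qpochhammer_inf_Suc[OF norm_power_less_one[OF q(1)], of 6 "- 1"] by (simp add: M_def)
  then show "theta (q ^ 3) (- 1) = 2 * M 6 ^ 2 * P 6"
    using jtp[of "- 1"] by (simp add: M_def power2_eq_square)
qed

lemma sextic_product_identity:
  fixes q :: complex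
  assumes q: "norm q < 1" "q \<noteq> 0"
  defines "P k \<equiv> qpochhammer_inf (q ^ k) (q ^ 6)" and "M k \<equiv> qpochhammer_inf (- (q ^ k)) (q ^ 6)"
  shows "(P 1 * P 5)\<^sup>2 * (P 2 * P 4)\<^sup>2 + (M 1 * M 5)\<^sup>2 * (M 2 * M 4)\<^sup>2
       = 2 * M 3 ^ 4 * (M 2 * M 4) * (M 6)\<^sup>2"
proof -
  have "P 6 \<noteq> 0"
    unfolding P_def using norm_power_less_one[OF q(1)] by (intro qpochhammer_inf_nonzero) auto
  moreover have "P 6 ^ 4 * ((P 1 * P 5)\<^sup>2 * (P 2 * P 4)\<^sup>2 + (M 1 * M 5)\<^sup>2 * (M 2 * M 4)\<^sup>2)
      = P 6 ^ 4 * (2 * M 3 ^ 4 * (M 2 * M 4) * (M 6)\<^sup>2)"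
    using theta_cube_identity[OF q] unfolding theta_cube_values[OF q, folded P_def M_def]
    by (simp add: algebra_simps power2_eq_square eval_nat_numeral)
  ultimately show ?thesis
    by simp
qed

lemma sextic_product_relations:
  fixes q :: complex
  assumes q: "norm q < 1"
  defines "P k \<equiv> qpochhammer_inf (q ^ k) (q ^ 6)" and "M k \<equiv> qpochhammer_inf (- (q ^ k)) (q ^ 6)"
  shows "P 1 * P 5 * (M 1 * M 5) * (M 2 * M 4) = 1" and "P 3 * M 3 * M 6 = 1"
proof -
  have nonzero: "P k \<noteq> 0" if "k > 0" for k
    unfolding P_def using norm_power_less_one[OF q] that by (simp add: qpochhammer_inf_nonzero)
  note f = f_sextic_dissection[OF q, folded P_def M_def]
  have "f 3 q * qpochhammer_inf (- (q ^ 3)) (q ^ 3) = f 6 q"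
    using qpochhammer_inf_mult_uminus[OF norm_power_less_one[OF q, of 3], of "q ^ 3"]
    by (simp add: f_eq_qpochhammer_inf power_mult[symmetric])
  then show rel_3: "P 3 * M 3 * M 6 = 1"
    using nonzero[of 6] by (simp add: f mult_ac)
  have "f 1 q * qpochhammer_inf (- q) q = f 2 q"
    using qpochhammer_inf_mult_uminus[OF q, of q] by (simp add: f_eq_qpochhammer_inf)
  then have "P 2 * P 4 * P 6 * (P 1 * P 5 * (M 1 * M 5) * (M 2 * M 4) * (P 3 * M 3 * M 6))
      = P 2 * P 4 * P 6 * 1"
    unfolding f(1,2,7) by (simp add: mult_ac)
  then show "P 1 * P 5 * (M 1 * M 5) * (M 2 * M 4) = 1"
    using rel_3 nonzero[of 2] nonzero[of 4] nonzero[of 6] by simp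
qed

(* With P and M as in f_sextic_dissection, u, v, w, y, a, b, c, e stand for
   P1 P5, P2 P4, M1 M5, M2 M4, P3, M3, M6, P6. *)
lemma lemma3p1_algebraic:
  fixes u v w y a b c e :: "'a::field"
  assumes rel: "u * w * y = 1" "a * b * c = 1"
    and cube: "u\<^sup>2 * v\<^sup>2 + w\<^sup>2 * y\<^sup>2 = 2 * b ^ 4 * y * c\<^sup>2"
    and nz: "u \<noteq> 0" "v \<noteq> 0" "y \<noteq> 0" "a \<noteq> 0" "c \<noteq> 0" "e \<noteq> 0"
  shows "(v * e)\<^sup>2 * (a * e) * (e * c) ^ 3 / ((v * y * e * c) ^ 4 * e\<^sup>2)
         + (v * e) ^ 4 * (a * e) ^ 5 * (e * c) ^ 3 / ((u * v * a * e) ^ 4 * (v * y * e * c) ^ 4 * e ^ 4)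
         = 2 * (v * e * e ^ 5 / ((u * v * a * e)\<^sup>2 * (a * e) * (v * y * e * c) ^ 3))"
proof -
  have "w = 1 / (u * y)" "b = 1 / (a * c)"
    using rel nz by (simp_all add: field_simps)
  with cube have "u ^ 4 * v\<^sup>2 + 1 = 2 * u\<^sup>2 * y / (a ^ 4 * c\<^sup>2)"
    using nz by (simp add: field_simps eval_nat_numeral)
  moreover have "(v * e)\<^sup>2 * (a * e) * (e * c) ^ 3 / ((v * y * e * c) ^ 4 * e\<^sup>2)
         + (v * e) ^ 4 * (a * e) ^ 5 * (e * c) ^ 3 / ((u * v * a * e) ^ 4 * (v * y * e * c) ^ 4 * e ^ 4)
      = a / (u ^ 4 * v ^ 4 * y ^ 4 * c) * (u ^ 4 * v\<^sup>2 + 1)"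
    using nz by (simp add: field_simps eval_nat_numeral)
  moreover have "2 * (v * e * e ^ 5 / ((u * v * a * e)\<^sup>2 * (a * e) * (v * y * e * c) ^ 3))
      = a / (u ^ 4 * v ^ 4 * y ^ 4 * c) * (2 * u\<^sup>2 * y / (a ^ 4 * c\<^sup>2))"
    using nz by (simp add: field_simps eval_nat_numeral)
  ultimately show ?thesis
    by simp
qed

theorem lemma3p1:
  fixes q :: complex
  assumes "norm q < 1"
  shows "(f 2 q)^2 * f 3 q * (f 12 q)^3 / ((f 4 q)^4 * (f 6 q)^2)
         + (f 2 q)^4 * (f 3 q)^5 * (f 12 q)^3 / ((f 1 q)^4 * (f 4 q)^4 * (f 6 q)^4)
         = 2 * (f 2 q * (f 6 q)^5 / ((f 1 q)^2 * f 3 q * (f 4 q)^3))"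
proof (cases "q = 0")
  case True
  then have "f m q = 1" if "m > 0" for m
    using that by (simp add: f_def power_0_left)
  then show ?thesis
    by simp
next
  case False
  define P where "P k = qpochhammer_inf (q ^ k) (q ^ 6)" for k
  define M where "M k = qpochhammer_inf (- (q ^ k)) (q ^ 6)" for k
  have nonzero: "P k \<noteq> 0" "M k \<noteq> 0" if "k > 0" for k
    unfolding P_def M_def using norm_power_less_one[OF assms] that
    by (simp_all add: qpochhammer_inf_nonzero)
  note relations = sextic_product_relations[OF assms, folded P_def M_def]
  note cube = sextic_product_identity[OF assms False, folded P_def M_def]
  show ?thesis
    unfolding f_sextic_dissection[OF assms, folded P_def M_def]
    by (rule lemma3p1_algebraic[OF relations cube]) (simp_all add: nonzero)
qed

end
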